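(* Let $q=2^m$ with $m$ a positive integer, let $b\in\mathbb{F}_q^*$ and $\delta\in\mathbb{F}_{q^2}\setminus\mathbb{F}_q$. Put $$A=b\,\mathrm{Tr}_{q^2/q}(\delta),\quad B=b\,\delta^{2q+2}\mathrm{Tr}_{q^2/q}(\delta),\quad C=\mathrm{Tr}_{q^2/q}(\delta)^2,\quad D=1/A,$$ and define $S_{-1}=0$, $S_0=1$, $S_i=C^{2^{i-1}}S_{i-1}+D^{2^{i-1}}S_{i-2}$ for $i\geq1$. If the polynomial $$P(x)=b(x^q+x+\delta)^{2q+3}+x$$ permutes $\mathbb{F}_{q^2}$, then its compositional inverse over $\mathbb{F}_{q^2}$ is $$P^{-1}(x)=x+b\left(\delta+\sum_{i=0}^{m-1}\left(D^{2^i}S_{m-2-i}^{2^{i+1}}+D^{1-2^{i}}S_i\right)\left(x^q+x+B\right)^{2^i}\right)^{2q+3}.$$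
   Context: $\mathrm{Tr}_{q^2/q}(y)=y+y^q$. The compositional inverse of a permutation polynomial $f$ of $\mathbb{F}_{Q}$ is the unique polynomial $f^{-1}$ (modulo $x^Q-x$) with $f(f^{-1}(c))=f^{-1}(f(c))=c$ for all $c\in\mathbb{F}_Q$. *)

theory Defs
  imports Complex_Main
begin

definition trq :: "nat \<Rightarrow> 'a::field \<Rightarrow> 'a" where
  "trq q y = y + y ^ q"

text \<open>Shifted sequence: Sseq C D n = S_{n-1}, so Sseq 0 = S_{-1} = 0, Sseq 1 = S_0 = 1,
  and S_i = C^(2^(i-1)) S_{i-1} + D^(2^(i-1)) S_{i-2} for i >= 1.\<close>
fun Sseq :: "'a::field \<Rightarrow> 'a \<Rightarrow> nat \<Rightarrow> 'a" where
  "Sseq C D 0 = 0"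
| "Sseq C D (Suc 0) = 1"
| "Sseq C D (Suc (Suc n)) = C ^ (2 ^ n) * Sseq C D (Suc n) + D ^ (2 ^ n) * Sseq C D n"

end

theory Submission
  imports Defs "HOL-Computational_Algebra.Polynomial" "HOL-Computational_Algebra.Primes"
begin

(* Write s_n = Sseq C D n, Tr y = y^q + y, U t = b (t + \<delta>)^(2q+3) and
   M t = t^4 + C t^2 + D t (lin_quartic).
   Then P x = U (Tr x) + x, and for t in F_q one computes Tr (U t) = A (t^4 + C t^2) + B, hence
   Tr (P x) + B = A M (Tr x).  Since P is injective, the F_2-linear map M permutes F_q, and
   P^-1 y = y + U (M^-1 ((Tr y + B) / A)).
   To invert M on F_q, iterate t^4 = C t^2 + D t + M t to get
   t^(2^(n+1)) = s_(n+1) t^2 + D s_n^2 t + G_n (M t) with a linearized polynomial G_n (Sseq_lin).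
   For n = m - 1 and n = m the left-hand sides are t and t^2, which gives a linear system for
   t and t^2.  By a Casoratian identity for s its determinant is s_(m+1) + D s_(m-1)^2; this
   element is idempotent, and nonzero because M is onto, hence equal to 1.  Solving the system
   gives the stated coefficients, once more by the Casoratian identity. *)

lemma of_nat_card_UNIV_eq_0: "of_nat (card (UNIV::'a::{ring_1,finite} set)) = (0::'a)"
proof -
  have "(\<Sum>y\<in>UNIV. y + 1) = (\<Sum>y\<in>UNIV. y::'a)"
    by (rule sum.reindex_bij_witness[of _ "\<lambda>y. y - 1" "\<lambda>y. y + 1"]) auto
  then show ?thesis
    by (simp add: sum.distrib)
qed

lemma CHAR_eq_2_if_card_power2:
  assumes "card (UNIV::'a::{field,finite} set) = 2 ^ k" and "k > 0"
  shows "CHAR('a) = 2"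
proof -
  have "prime CHAR('a)"
    by (simp add: finite_imp_CHAR_pos prime_CHAR_semidom)
  moreover have "CHAR('a) dvd 2 ^ k"
    using of_nat_card_UNIV_eq_0[where 'a = 'a] assms(1) by (simp only: of_nat_eq_0_iff_char_dvd)
  ultimately show ?thesis
    by (metis prime_dvd_power primes_dvd_imp_eq two_is_prime_nat)
qed

lemma power_card_UNIV_eq_self: "(x::'a::{field,finite}) ^ card (UNIV::'a set) = x"
proof (cases "x = 0")
  case False
  have "(\<Prod>y\<in>UNIV-{0}. x * y) = (\<Prod>y\<in>UNIV-{0}. y)"
    by (rule prod.reindex_bij_witness[of _ "\<lambda>y. y / x" "\<lambda>y. x * y"]) (use False in auto)
  then have "x ^ (card (UNIV::'a set) - 1) = 1"
    by (simp add: prod.distrib card_Diff_singleton)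
  then show ?thesis
    by (metis finite_UNIV_card_ge_0 finite power_eq_if mult.right_neutral neq0_conv not_less0)
qed (simp add: finite_UNIV_card_ge_0)

lemma power_power_commute: "((x::'a::monoid_mult) ^ k) ^ n = (x ^ n) ^ k"
  by (simp add: mult.commute flip: power_mult)

lemma power_power_eq_self_if_card_square:
  assumes "card (UNIV::'a::{field,finite} set) = q ^ 2"
  shows "((x::'a) ^ q) ^ q = x"
  using power_card_UNIV_eq_self[of x] assms by (simp add: power2_eq_square power_mult)

lemma char2_numeral_2_eq_0:
  assumes "CHAR('a::comm_ring_1) = 2"
  shows "(2::'a) = 0"
  using of_nat_CHAR[where 'a = 'a] assms by simp

lemma char2_add_self:
  assumes "CHAR('a::comm_ring_1) = 2"
  shows "x + x = (0::'a)"
  by (metis char2_numeral_2_eq_0[OF assms] mult_2 mult_zero_left)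

lemma char2_power2_add:
  assumes "CHAR('a::comm_ring_1) = 2"
  shows "(x + y :: 'a) ^ 2 ^ n = x ^ 2 ^ n + y ^ 2 ^ n"
  by (rule freshmans_dream') (simp_all add: assms)

lemma char2_square_add:
  assumes "CHAR('a::comm_ring_1) = 2"
  shows "(x + y :: 'a) ^ 2 = x ^ 2 + y ^ 2"
  using char2_power2_add[OF assms, of x y 1] by (simp only: power_one_right)

lemma Sseq_power2_recurrence:
  assumes "CHAR('a::field) = 2"
  shows "Sseq C D (Suc (Suc n)) ^ 2 ^ j
       = (C::'a) ^ 2 ^ (j + n) * Sseq C D (Suc n) ^ 2 ^ j + D ^ 2 ^ (j + n) * Sseq C D n ^ 2 ^ j"
  by (simp add: char2_power2_add[OF assms] power_mult_distrib power_add mult.commute flip: power_mult)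

lemma Sseq_squares_recurrence:
  assumes "CHAR('a::field) = 2"
  shows "Sseq C D (Suc (Suc n)) = (C::'a) * Sseq C D (Suc n) ^ 2 + D ^ 2 * Sseq C D n ^ 4"
proof (induction n rule: induct_nat_012)
  case 0
  then show ?case by simp
next
  case 1
  then show ?case by (simp add: power2_eq_square)
next
  case (ge2 n)
  let ?S = "Sseq C D"
  have "?S (Suc (Suc (Suc n))) ^ 2
      = C ^ 2 ^ Suc (Suc n) * ?S (Suc (Suc n)) ^ 2 + D ^ 2 ^ Suc (Suc n) * ?S (Suc n) ^ 2"
    using Sseq_power2_recurrence[OF assms, of C D "Suc n" 1] by simp
  moreover have "?S (Suc (Suc n)) ^ 4
      = C ^ 2 ^ Suc (Suc n) * ?S (Suc n) ^ 4 + D ^ 2 ^ Suc (Suc n) * ?S n ^ 4"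
    using Sseq_power2_recurrence[OF assms, of C D n 2] by simp
  ultimately show ?case
    using ge2 by (simp del: Sseq.simps add: Sseq.simps(3)[of C D "Suc (Suc n)"] algebra_simps)
qed

lemma casoratian_linear_recurrence:
  fixes F G c d :: "nat \<Rightarrow> 'a::comm_ring_1"
  assumes F: "\<And>n. F (Suc (Suc n)) = c n * F (Suc n) + d n * F n"
    and G: "\<And>n. G (Suc (Suc n)) = c n * G (Suc n) + d n * G n"
  shows "F (Suc n) * G n - F n * G (Suc n) = (-1) ^ n * (\<Prod>k<n. d k) * (F 1 * G 0 - F 0 * G 1)"
proof (induction n)
  case (Suc n)
  have "F (Suc (Suc n)) * G (Suc n) - F (Suc n) * G (Suc (Suc n))
      = - d n * (F (Suc n) * G n - F n * G (Suc n))"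
    by (simp add: F G algebra_simps)
  also have "\<dots> = - d n * ((-1) ^ n * (\<Prod>k<n. d k) * (F 1 * G 0 - F 0 * G 1))"
    by (simp only: Suc.IH)
  finally show ?case
    by (simp add: algebra_simps)
qed simp

lemma sum_power2_shift: "(\<Sum>k<n. 2 ^ (j + k) :: nat) = 2 ^ (j + n) - 2 ^ j"
  by (induction n) (simp_all add: power_add)

lemma Sseq_casoratian:
  assumes "CHAR('a::field) = 2"
  shows "Sseq C D (Suc (j + n)) * Sseq C D n ^ 2 ^ j + Sseq C D (j + n) * Sseq C D (Suc n) ^ 2 ^ j
       = (D::'a) ^ (2 ^ (j + n) - 2 ^ j) * Sseq C D j"
proof -
  let ?S = "Sseq C D"
  have "?S (j + Suc n) * ?S n ^ 2 ^ j - ?S (j + n) * ?S (Suc n) ^ 2 ^ j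
      = (-1) ^ n * (\<Prod>k<n. D ^ 2 ^ (j + k)) * (?S (j + 1) * ?S 0 ^ 2 ^ j - ?S (j + 0) * ?S 1 ^ 2 ^ j)"
    by (rule casoratian_linear_recurrence[where F = "\<lambda>k. ?S (j + k)" and G = "\<lambda>k. ?S k ^ 2 ^ j"
          and c = "\<lambda>k. C ^ 2 ^ (j + k)" and d = "\<lambda>k. D ^ 2 ^ (j + k)"])
      (simp, rule Sseq_power2_recurrence[OF assms])
  moreover have "(\<Prod>k<n. D ^ 2 ^ (j + k)) = D ^ (2 ^ (j + n) - 2 ^ j)"
    by (simp add: sum_power2_shift flip: power_sum)
  ultimately show ?thesis
    by (simp add: minus_CHAR_2[OF assms] uminus_CHAR_2[OF assms])
qed

definition Sseq_lin :: "'a::field \<Rightarrow> 'a \<Rightarrow> nat \<Rightarrow> 'a \<Rightarrow> 'a" where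
  "Sseq_lin C D n s = (\<Sum>i<n. Sseq C D (n - i) ^ 2 ^ (i + 1) * s ^ 2 ^ i)"

lemma Sseq_lin_Suc:
  assumes "CHAR('a::field) = 2"
  shows "Sseq_lin C D (Suc n) s = Sseq C D (Suc n) ^ 2 * s + Sseq_lin C D n (s::'a) ^ 2"
  unfolding Sseq_lin_def sum.lessThan_Suc_shift
  by (simp add: freshmans_dream_sum'[where n = 1] assms power_mult_distrib mult.commute
      flip: power_mult)

lemma Sseq_lin_combination:
  assumes "m > 0"
  shows "u * Sseq_lin C D (m - 1) s + v * Sseq_lin C D m s
       = (\<Sum>i<m. (u * Sseq C D (m - 1 - i) ^ 2 ^ (i + 1) + v * Sseq C D (m - i) ^ 2 ^ (i + 1))
                 * (s::'a::field) ^ 2 ^ i)"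
proof -
  have "Sseq_lin C D (m - 1) s = (\<Sum>i<m. Sseq C D (m - 1 - i) ^ 2 ^ (i + 1) * s ^ 2 ^ i)"
    using \<open>m > 0\<close> unfolding Sseq_lin_def by (cases m) simp_all
  then show ?thesis
    by (simp add: Sseq_lin_def sum_distrib_left algebra_simps flip: sum.distrib)
qed

definition lin_quartic :: "'a::field \<Rightarrow> 'a \<Rightarrow> 'a \<Rightarrow> 'a" where
  "lin_quartic C D t = t ^ 4 + C * t ^ 2 + D * t"

lemma lin_quartic_add:
  assumes "CHAR('a::field) = 2"
  shows "lin_quartic C D (x + y) = lin_quartic C D x + lin_quartic C D (y::'a)"
proof -
  have "(x + y) ^ 4 = x ^ 4 + y ^ 4"
    using char2_power2_add[OF assms, of x y 2] by simp
  then show ?thesis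
    by (simp add: lin_quartic_def char2_square_add[OF assms] algebra_simps)
qed

lemma lin_quartic_power_eq_self:
  assumes char2: "CHAR('a::field) = 2" and q: "q = 2 ^ m"
    and "C ^ q = C" and "D ^ q = D" and "(t::'a) ^ q = t"
  shows "lin_quartic C D t ^ q = lin_quartic C D t"
  using assms(3-5) unfolding lin_quartic_def q
  by (simp add: char2_power2_add[OF char2] power_mult_distrib power_power_commute[of _ _ "2 ^ m"])

lemma power_2_power_Suc_expansion:
  assumes char2: "CHAR('a::field) = 2"
  shows "(t::'a) ^ 2 ^ Suc n
       = Sseq C D (Suc n) * t ^ 2 + D * Sseq C D n ^ 2 * t + Sseq_lin C D n (lin_quartic C D t)"
proof (induction n)
  case 0
  then show ?case by (simp add: Sseq_lin_def)
next
  case (Suc n)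
  let ?S = "Sseq C D" and ?s = "lin_quartic C D t"
  have t4: "t ^ 4 = ?s + C * t ^ 2 + D * t"
    by (simp add: lin_quartic_def algebra_simps char2_numeral_2_eq_0[OF char2])
  have "t ^ 2 ^ Suc (Suc n) = (t ^ 2 ^ Suc n) ^ 2"
    by (simp flip: power_mult)
  also have "\<dots> = ?S (Suc n) ^ 2 * t ^ 4 + D ^ 2 * ?S n ^ 4 * t ^ 2 + Sseq_lin C D n ?s ^ 2"
    unfolding Suc.IH by (simp add: char2_square_add[OF char2] power_mult_distrib flip: power_mult)
  finally show ?case
    by (simp add: t4 Sseq_squares_recurrence[OF char2] Sseq_lin_Suc[OF char2] algebra_simps
        del: Sseq.simps)
qed

lemma square_expansion_if_fixed:
  assumes char2: "CHAR('a::field) = 2" and x_fixed: "(x::'a) ^ 2 ^ m = x"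
  shows "x ^ 2 = Sseq C D (Suc m) * x ^ 2 + D * Sseq C D m ^ 2 * x + Sseq_lin C D m (lin_quartic C D x)"
proof -
  have "x ^ 2 ^ Suc m = (x ^ 2 ^ m) ^ 2"
    by (simp add: mult.commute flip: power_mult)
  then show ?thesis
    using power_2_power_Suc_expansion[OF char2, where t = x and n = m] x_fixed by simp
qed

lemma sum_power2_vanishing_coeff_eq_0:
  fixes c :: "nat \<Rightarrow> 'a::idom"
  assumes vanish: "\<forall>s\<in>K. (\<Sum>i<m. c i * s ^ 2 ^ i) = 0" and card: "2 ^ m \<le> card K" and "j < m"
  shows "c j = 0"
proof -
  define p where "p = (\<Sum>i<m. monom (c i) (2 ^ i))"
  have "coeff p (2 ^ j) = c j"
    using \<open>j < m\<close> by (simp add: p_def coeff_sum coeff_monom)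
  moreover have "p = 0"
  proof (rule ccontr)
    assume "p \<noteq> 0"
    have "degree p \<le> 2 ^ (m - 1)"
      unfolding p_def
    proof (rule degree_sum_le)
      fix i assume "i \<in> {..<m}"
      then have "(2::nat) ^ i \<le> 2 ^ (m - 1)"
        by (intro power_increasing) auto
      then show "degree (monom (c i) (2 ^ i)) \<le> 2 ^ (m - 1)"
        using degree_monom_le order_trans by blast
    qed simp
    moreover have "card K \<le> card {x. poly p x = 0}"
      using vanish \<open>p \<noteq> 0\<close>
      by (intro card_mono poly_roots_finite) (auto simp: p_def poly_sum poly_monom)
    moreover note card_poly_roots_bound[OF \<open>p \<noteq> 0\<close>]
    moreover have "(2::nat) ^ (m - 1) < 2 ^ m"
      using \<open>j < m\<close> by simp
    ultimately show False
      using card by linarith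
  qed
  ultimately show ?thesis
    by simp
qed

(* Determinant of the linear system in x and x^2 that power_2_power_Suc_expansion yields at
   n = m - 1 and n = m when x^(2^m) = x. *)
definition Sseq_det :: "'a::field \<Rightarrow> 'a \<Rightarrow> nat \<Rightarrow> 'a" where
  "Sseq_det C D m = Sseq C D (Suc m) + D * Sseq C D (m - 1) ^ 2"

lemma Sseq_det_mult_fixed:
  assumes char2: "CHAR('a::field) = 2" and "m > 0" and D_fixed: "D ^ 2 ^ m = D" and "D \<noteq> 0"
    and x_fixed: "(x::'a) ^ 2 ^ m = x"
  shows "Sseq_det C D m * x
       = (1 + Sseq C D (Suc m)) * Sseq_lin C D (m - 1) (lin_quartic C D x)
         + Sseq C D m * Sseq_lin C D m (lin_quartic C D x)"
proof -
  let ?S = "Sseq C D" and ?s = "lin_quartic C D x"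
  define a cc dd where "a = ?S (Suc m)" and "cc = ?S m" and "dd = D * ?S (m - 1) ^ 2"
  have m: "Suc (m - 1) = m" "1 + (m - 1) = m"
    using \<open>m > 0\<close> by simp_all
  have "x = cc * x ^ 2 + dd * x + Sseq_lin C D (m - 1) ?s"
    using power_2_power_Suc_expansion[OF char2, where t = x and n = "m - 1", unfolded m] x_fixed
    by (simp add: cc_def dd_def)
  moreover have "x ^ 2 = a * x ^ 2 + D * cc ^ 2 * x + Sseq_lin C D m ?s"
    using square_expansion_if_fixed[OF char2 x_fixed] by (simp add: a_def cc_def)
  ultimately have G: "Sseq_lin C D (m - 1) ?s = x - cc * x ^ 2 - dd * x"
    "Sseq_lin C D m ?s = x ^ 2 - a * x ^ 2 - D * cc ^ 2 * x"
    by (simp_all add: algebra_simps)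
  have D_inv: "D * D ^ (2 ^ m - 2) = 1"
  proof -
    have "(2::nat) \<le> 2 ^ m"
      using \<open>m > 0\<close> by (cases m) auto
    then have "D ^ 2 ^ m = D ^ (2 ^ m - 2) * D ^ 2"
      by (metis le_add_diff_inverse2 power_add)
    then have "D = (D * D ^ (2 ^ m - 2)) * D"
      using D_fixed by (simp add: power2_eq_square ac_simps)
    then show ?thesis
      using \<open>D \<noteq> 0\<close> by (metis mult_cancel_right1)
  qed
  have "a * dd + cc * (D * cc ^ 2) = D * (a * ?S (m - 1) ^ 2 + cc * cc ^ 2)"
    by (simp add: dd_def algebra_simps)
  also have "a * ?S (m - 1) ^ 2 + cc * cc ^ 2 = D ^ (2 ^ m - 2)"
    using Sseq_casoratian[OF char2, of C D 1 "m - 1", unfolded m] by (simp add: a_def cc_def)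
  finally have det: "a * dd + cc * (D * cc ^ 2) = 1"
    using D_inv by simp
  have "(1 + a) * Sseq_lin C D (m - 1) ?s + cc * Sseq_lin C D m ?s
      = (a - dd) * x + (1 - (a * dd + cc * (D * cc ^ 2))) * x - 2 * (a * cc * x ^ 2)"
    unfolding G by (simp add: algebra_simps power2_eq_square)
  also have "\<dots> = (a + dd) * x"
    by (simp add: det char2_numeral_2_eq_0[OF char2] minus_CHAR_2[OF char2])
  finally show ?thesis
    by (simp add: Sseq_det_def a_def cc_def dd_def)
qed

lemma Sseq_det_idem:
  assumes char2: "CHAR('a::field) = 2" and "m > 0" and "C ^ 2 ^ m = C" and "D ^ 2 ^ m = (D::'a)"
  shows "Sseq_det C D m ^ 2 = Sseq_det C D m"
proof -
  let ?S = "Sseq C D"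
  have m: "Suc (m - 1) = m" "1 + (m - 1) = m"
    using \<open>m > 0\<close> by simp_all
  have "?S (Suc m) ^ 2 = C * ?S m ^ 2 + D * ?S (m - 1) ^ 2"
    using Sseq_power2_recurrence[OF char2, of C D "m - 1" 1, unfolded m] assms(3,4) by simp
  moreover have "?S (Suc m) = C * ?S m ^ 2 + D ^ 2 * ?S (m - 1) ^ 4"
    using Sseq_squares_recurrence[OF char2, of C D "m - 1", unfolded m] .
  ultimately show ?thesis
    by (simp add: Sseq_det_def char2_square_add[OF char2] power_mult_distrib flip: power_mult)
qed

(* If the determinant vanished, linearized polynomials of degree at most 2^(m-1) with a nonzero
   coefficient would vanish on the 2^m elements of F_q. *)
lemma Sseq_det_neq_0:
  assumes char2: "CHAR('a::field) = 2" and "m > 0" and "D ^ 2 ^ m = (D::'a)" and "D \<noteq> 0"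
    and onto: "{x. x ^ 2 ^ m = x} \<subseteq> lin_quartic C D ` {x. x ^ 2 ^ m = x}"
    and card: "2 ^ m \<le> card {x::'a. x ^ 2 ^ m = x}"
  shows "Sseq_det C D m \<noteq> 0"
proof
  let ?S = "Sseq C D" and ?K = "{x::'a. x ^ 2 ^ m = x}"
  define h where "h i = (1 + ?S (Suc m)) * ?S (m - 1 - i) ^ 2 ^ (i + 1) + ?S m * ?S (m - i) ^ 2 ^ (i + 1)"
    for i
  assume det0: "Sseq_det C D m = 0"
  have "\<forall>s\<in>?K. (\<Sum>i<m. h i * s ^ 2 ^ i) = 0"
  proof
    fix s assume "s \<in> ?K"
    with onto obtain x where "x ^ 2 ^ m = x" and "s = lin_quartic C D x"
      by blast
    have "(\<Sum>i<m. h i * s ^ 2 ^ i) = (1 + ?S (Suc m)) * Sseq_lin C D (m - 1) s + ?S m * Sseq_lin C D m s"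
      unfolding h_def by (rule Sseq_lin_combination[OF \<open>m > 0\<close>, symmetric])
    then show "(\<Sum>i<m. h i * s ^ 2 ^ i) = 0"
      using Sseq_det_mult_fixed[OF char2 assms(2-4) \<open>x ^ 2 ^ m = x\<close>, of C] det0
        \<open>s = lin_quartic C D x\<close> by simp
  qed
  note h_eq_0 = sum_power2_vanishing_coeff_eq_0[OF this card]
  have Sm: "?S m = 0"
    using h_eq_0[of "m - 1"] \<open>m > 0\<close> by (simp add: h_def power_0_left)
  then have "m \<ge> 2"
    using \<open>m > 0\<close> by (cases "m = 1") auto
  then have "1 + ?S (Suc m) = 0"
    using h_eq_0[of "m - 2"] Sm by (simp add: h_def numeral_2_eq_2)
  then have "?S (Suc m) = 1"
    by (simp add: add_eq_0_iff uminus_CHAR_2[OF char2])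
  then have "\<forall>s\<in>?K. (\<Sum>i<m. ?S (m - i) ^ 2 ^ (i + 1) * s ^ 2 ^ i) = 0"
    using onto square_expansion_if_fixed[OF char2, of _ m C D] Sm
    by (fastforce simp: Sseq_lin_def)
  from sum_power2_vanishing_coeff_eq_0[OF this card, of "m - 1"] \<open>m > 0\<close>
  show False
    by simp
qed

definition lin_quartic_inv :: "'a::field \<Rightarrow> 'a \<Rightarrow> nat \<Rightarrow> 'a \<Rightarrow> 'a" where
  "lin_quartic_inv C D m z = (\<Sum>i<m.
     (D ^ 2 ^ i * Sseq C D (m - 1 - i) ^ 2 ^ (i + 1) + D powi (1 - 2 ^ i) * Sseq C D (i + 1)) * z ^ 2 ^ i)"

lemma lin_quartic_inv_coeff:
  assumes char2: "CHAR('a::field) = 2" and D_fixed: "D ^ 2 ^ m = (D::'a)" and "D \<noteq> 0" and "i < m"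
  shows "(D ^ 2 ^ i * Sseq C D (m - 1 - i) ^ 2 ^ (i + 1) + D powi (1 - 2 ^ i) * Sseq C D (i + 1)) / D ^ 2 ^ i
       = (1 + Sseq C D (Suc m)) * Sseq C D (m - 1 - i) ^ 2 ^ (i + 1)
         + Sseq C D m * Sseq C D (m - i) ^ 2 ^ (i + 1)"
proof -
  let ?S = "Sseq C D"
  have idx: "Suc (i + 1 + (m - 1 - i)) = Suc m" "i + 1 + (m - 1 - i) = m" "Suc (m - 1 - i) = m - i"
    using \<open>i < m\<close> by simp_all
  have "D powi (1 - 2 ^ i) / D ^ 2 ^ i = D / D ^ 2 ^ (i + 1)"
  proof -
    have "D powi (2 ^ i) = D ^ 2 ^ i"
      by (metis power_int_of_nat of_nat_numeral of_nat_power)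
    then show ?thesis
      using \<open>D \<noteq> 0\<close> by (simp add: power_int_diff mult_2 power_add)
  qed
  also have "\<dots> = D ^ (2 ^ m - 2 ^ (i + 1))"
  proof -
    have "(2::nat) ^ (i + 1) \<le> 2 ^ m"
      using \<open>i < m\<close> by (intro power_increasing) auto
    then have "D ^ 2 ^ m = D ^ (2 ^ m - 2 ^ (i + 1)) * D ^ 2 ^ (i + 1)"
      by (metis le_add_diff_inverse2 power_add)
    then show ?thesis
      using D_fixed \<open>D \<noteq> 0\<close> by (simp add: field_simps)
  qed
  finally have scale: "D powi (1 - 2 ^ i) / D ^ 2 ^ i = D ^ (2 ^ m - 2 ^ (i + 1))" .
  have "(D ^ 2 ^ i * ?S (m - 1 - i) ^ 2 ^ (i + 1) + D powi (1 - 2 ^ i) * ?S (i + 1)) / D ^ 2 ^ i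
      = ?S (m - 1 - i) ^ 2 ^ (i + 1) + D powi (1 - 2 ^ i) / D ^ 2 ^ i * ?S (i + 1)"
    using \<open>D \<noteq> 0\<close> by (simp add: add_divide_distrib)
  also have "\<dots> = ?S (m - 1 - i) ^ 2 ^ (i + 1)
      + (?S (Suc m) * ?S (m - 1 - i) ^ 2 ^ (i + 1) + ?S m * ?S (m - i) ^ 2 ^ (i + 1))"
    unfolding scale Sseq_casoratian[OF char2, of C D "i + 1" "m - 1 - i", unfolded idx] ..
  finally show ?thesis
    by (simp add: algebra_simps)
qed

lemma lin_quartic_inv_inverse:
  assumes char2: "CHAR('a::field) = 2" and "m > 0" and "C ^ 2 ^ m = C" and "D ^ 2 ^ m = (D::'a)"
    and "D \<noteq> 0"
    and onto: "{x. x ^ 2 ^ m = x} \<subseteq> lin_quartic C D ` {x. x ^ 2 ^ m = x}"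
    and card: "2 ^ m \<le> card {x::'a. x ^ 2 ^ m = x}"
    and x_fixed: "x ^ 2 ^ m = x"
  shows "lin_quartic_inv C D m (lin_quartic C D x / D) = x"
proof -
  let ?S = "Sseq C D" and ?s = "lin_quartic C D x"
  have "Sseq_det C D m \<noteq> 0"
    by (rule Sseq_det_neq_0[OF char2 assms(2,4,5) onto card])
  moreover have "Sseq_det C D m ^ 2 = Sseq_det C D m"
    by (rule Sseq_det_idem[OF char2 assms(2-4)])
  ultimately have det1: "Sseq_det C D m = 1"
    by (simp add: power2_eq_square)
  have "lin_quartic_inv C D m (?s / D)
      = (\<Sum>i<m. ((1 + ?S (Suc m)) * ?S (m - 1 - i) ^ 2 ^ (i + 1) + ?S m * ?S (m - i) ^ 2 ^ (i + 1))
                 * ?s ^ 2 ^ i)"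
    unfolding lin_quartic_inv_def
  proof (rule sum.cong)
    fix i assume "i \<in> {..<m}"
    let ?c = "D ^ 2 ^ i * ?S (m - 1 - i) ^ 2 ^ (i + 1) + D powi (1 - 2 ^ i) * ?S (i + 1)"
    have "?c * (?s / D) ^ 2 ^ i = ?c / D ^ 2 ^ i * ?s ^ 2 ^ i"
      by (simp add: power_divide)
    then show "?c * (?s / D) ^ 2 ^ i
        = ((1 + ?S (Suc m)) * ?S (m - 1 - i) ^ 2 ^ (i + 1) + ?S m * ?S (m - i) ^ 2 ^ (i + 1)) * ?s ^ 2 ^ i"
      unfolding lin_quartic_inv_coeff[OF char2 assms(4,5) \<open>i \<in> {..<m}\<close>[simplified]] .
  qed simp
  also have "\<dots> = (1 + ?S (Suc m)) * Sseq_lin C D (m - 1) ?s + ?S m * Sseq_lin C D m ?s"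
    by (rule Sseq_lin_combination[OF \<open>m > 0\<close>, symmetric])
  also have "\<dots> = Sseq_det C D m * x"
    by (rule Sseq_det_mult_fixed[OF char2 assms(2,4,5) x_fixed, symmetric])
  finally show ?thesis
    by (simp add: det1)
qed

lemma trq_add:
  assumes "CHAR('a::field) = 2" and "q = 2 ^ m"
  shows "trq q (y + z) = trq q y + trq q (z::'a)"
  by (simp add: trq_def assms(2) char2_power2_add[OF assms(1)] algebra_simps)

lemma trq_power_eq_self:
  assumes char2: "CHAR('a::{field,finite}) = 2" and q: "q = 2 ^ m" and card: "card (UNIV::'a set) = q ^ 2"
  shows "trq q (y::'a) ^ q = trq q y"
  using power_power_eq_self_if_card_square[OF card, of y]
  by (simp add: trq_def q char2_power2_add[OF char2] add.commute)

(* y is recovered from Tr y and y + r (Tr y), where r picks a Tr-preimage; both lie in F_q. *)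
lemma card_fixed_subfield_ge:
  assumes char2: "CHAR('a::{field,finite}) = 2" and q: "q = 2 ^ m" and card: "card (UNIV::'a set) = q ^ 2"
  shows "q \<le> card {x::'a. x ^ q = x}"
proof -
  let ?K = "{x::'a. x ^ q = x}"
  define r where "r = inv (trq q :: 'a \<Rightarrow> 'a)"
  have "inj (\<lambda>y. (trq q y, y + r (trq q y)))"
    by (rule injI) auto
  moreover have "(\<lambda>y. (trq q y, y + r (trq q y))) ` UNIV \<subseteq> ?K \<times> ?K"
  proof (rule image_subsetI)
    fix y :: 'a
    have "trq q (y + r (trq q y)) = 0"
      by (simp add: trq_add[OF char2 q] r_def f_inv_into_f char2_add_self[OF char2])
    then have "(y + r (trq q y)) ^ q = y + r (trq q y)"
      by (simp add: trq_def add_eq_0_iff uminus_CHAR_2[OF char2])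
    then show "(trq q y, y + r (trq q y)) \<in> ?K \<times> ?K"
      using trq_power_eq_self[OF char2 q card] by simp
  qed
  ultimately have "card (UNIV::'a set) \<le> card (?K \<times> ?K)"
    by (intro card_inj_on_le) auto
  then have "q ^ 2 \<le> card ?K ^ 2"
    by (simp add: card card_cartesian_product power2_eq_square)
  then show ?thesis
    by (simp add: power2_le_iff_abs_le)
qed

lemma trq_mult_power:
  assumes card: "card (UNIV::'a::{field,finite} set) = q ^ 2" and b_fixed: "b ^ q = b"
  shows "trq q (b * (u::'a) ^ (2 * q + 3)) = b * (u ^ (q + 1)) ^ 2 * trq q u"
proof -
  define v where "v = u ^ q"
  have u_pow: "u ^ (2 * q + 3) = v ^ 2 * u ^ 3"
    by (simp add: v_def power_add mult.commute flip: power_mult)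
  have "v ^ q = u"
    unfolding v_def by (rule power_power_eq_self_if_card_square[OF card])
  then have v_pow: "(v ^ 2 * u ^ 3) ^ q = u ^ 2 * v ^ 3"
    unfolding power_mult_distrib power_power_commute[of _ _ q] by (simp add: v_def)
  have "trq q (b * u ^ (2 * q + 3)) = b * (v ^ 2 * u ^ 3) + b * (u ^ 2 * v ^ 3)"
    by (simp only: trq_def u_pow power_mult_distrib[of b] b_fixed v_pow)
  also have "\<dots> = b * (v * u) ^ 2 * (u + v)"
    by (simp add: power2_eq_square power3_eq_cube algebra_simps)
  finally show ?thesis
    by (simp add: v_def trq_def mult.commute)
qed

lemma trq_mult_shifted_power:
  assumes char2: "CHAR('a::{field,finite}) = 2" and q: "q = 2 ^ m" and card: "card (UNIV::'a set) = q ^ 2"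
    and b_fixed: "b ^ q = b" and t_fixed: "(t::'a) ^ q = t"
  shows "trq q (b * (t + \<delta>) ^ (2 * q + 3))
       = b * trq q \<delta> * (t ^ 4 + trq q \<delta> ^ 2 * t ^ 2 + \<delta> ^ (2 * q + 2))"
proof -
  have frob: "(x + y) ^ q = x ^ q + y ^ q" for x y :: 'a
    unfolding q by (rule char2_power2_add[OF char2])
  have "trq q (t + \<delta>) = trq q \<delta>"
    by (simp add: trq_def frob t_fixed char2_numeral_2_eq_0[OF char2] algebra_simps)
  moreover have "(t + \<delta>) ^ (q + 1) = t ^ 2 + trq q \<delta> * t + \<delta> ^ (q + 1)"
    by (simp add: frob t_fixed trq_def power2_eq_square algebra_simps)
  moreover have "(\<delta> ^ (q + 1)) ^ 2 = \<delta> ^ (2 * q + 2)"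
    by (simp only: power_mult[symmetric]) (simp add: algebra_simps)
  then have "(t ^ 2 + trq q \<delta> * t + \<delta> ^ (q + 1)) ^ 2 = t ^ 4 + trq q \<delta> ^ 2 * t ^ 2 + \<delta> ^ (2 * q + 2)"
    unfolding char2_square_add[OF char2] by (simp add: power_mult_distrib mult.commute flip: power_mult)
  ultimately show ?thesis
    using trq_mult_power[OF card b_fixed, of "t + \<delta>"] by simp
qed

lemma trq_P_eq_lin_quartic:
  assumes char2: "CHAR('a::{field,finite}) = 2" and q: "q = 2 ^ m" and card: "card (UNIV::'a set) = q ^ 2"
    and b_fixed: "b ^ q = b" and A_nonzero: "b * trq q \<delta> \<noteq> 0"
  shows "trq q (b * ((x::'a) ^ q + x + \<delta>) ^ (2 * q + 3) + x) + b * \<delta> ^ (2 * q + 2) * trq q \<delta>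
       = b * trq q \<delta> * lin_quartic (trq q \<delta> ^ 2) (1 / (b * trq q \<delta>)) (trq q x)"
proof -
  let ?t = "trq q x" and ?A = "b * trq q \<delta>"
  have "x ^ q + x = ?t"
    by (simp add: trq_def add.commute)
  then have "trq q (b * (x ^ q + x + \<delta>) ^ (2 * q + 3) + x)
      = ?A * (?t ^ 4 + trq q \<delta> ^ 2 * ?t ^ 2 + \<delta> ^ (2 * q + 2)) + ?t"
    using trq_mult_shifted_power[OF char2 q card b_fixed trq_power_eq_self[OF char2 q card]]
    by (simp add: trq_add[OF char2 q])
  then show ?thesis
    using A_nonzero by (simp add: lin_quartic_def algebra_simps char2_numeral_2_eq_0[OF char2])
qed

(* A nonzero t in F_q with M t = 0 would give x = U 0 + U t with Tr x = t and P x = P 0. *)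
lemma lin_quartic_inj_on_fixed:
  assumes char2: "CHAR('a::{field,finite}) = 2" and q: "q = 2 ^ m" and card: "card (UNIV::'a set) = q ^ 2"
    and b_fixed: "b ^ q = b" and A_nonzero: "b * trq q \<delta> \<noteq> 0"
    and inj: "inj (\<lambda>x::'a. b * (x ^ q + x + \<delta>) ^ (2 * q + 3) + x)"
  shows "inj_on (lin_quartic (trq q \<delta> ^ 2) (1 / (b * trq q \<delta>))) {t. t ^ q = t}"
proof (rule inj_onI)
  let ?A = "b * trq q \<delta>" and ?U = "\<lambda>t. b * (t + \<delta>) ^ (2 * q + 3)"
  let ?M = "lin_quartic (trq q \<delta> ^ 2) (1 / ?A)"
  fix t1 t2 assume t1: "t1 \<in> {t. t ^ q = t}" and t2: "t2 \<in> {t. t ^ q = t}" and "?M t1 = ?M t2"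
  define t where "t = t1 + t2"
  have t_fixed: "t ^ q = t"
    using t1 t2 by (simp add: t_def q char2_power2_add[OF char2])
  have "?M t = 0"
    using \<open>?M t1 = ?M t2\<close> by (simp add: t_def lin_quartic_add[OF char2] char2_add_self[OF char2])
  define x where "x = ?U 0 + ?U t"
  have "q > 0"
    using q by simp
  have "trq q x = ?A * (t ^ 4 + trq q \<delta> ^ 2 * t ^ 2)"
    using trq_mult_shifted_power[OF char2 q card b_fixed, of 0 \<delta>] \<open>q > 0\<close>
      trq_mult_shifted_power[OF char2 q card b_fixed t_fixed, of \<delta>]
    by (simp add: x_def trq_add[OF char2 q] algebra_simps char2_numeral_2_eq_0[OF char2])
  also have "t ^ 4 + trq q \<delta> ^ 2 * t ^ 2 = 1 / ?A * t"
    using \<open>?M t = 0\<close> unfolding lin_quartic_def by (metis add_eq_0_iff uminus_CHAR_2[OF char2])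
  also have "?A * (1 / ?A * t) = t"
    using A_nonzero by simp
  finally have "trq q x = t" .
  then have "x ^ q + x = t"
    by (simp add: trq_def add.commute)
  then have "b * (x ^ q + x + \<delta>) ^ (2 * q + 3) + x = ?U 0 + (?U t + ?U t)"
    by (simp add: x_def algebra_simps)
  also have "\<dots> = b * (0 ^ q + 0 + \<delta>) ^ (2 * q + 3) + 0"
    using \<open>q > 0\<close> by (simp add: char2_add_self[OF char2] zero_power)
  finally have "x = 0"
    by (rule injD[OF inj])
  then show "t1 = t2"
    using \<open>trq q x = t\<close> \<open>q > 0\<close>
    by (simp add: t_def trq_def zero_power add_eq_0_iff uminus_CHAR_2[OF char2])
qed

lemma lin_quartic_inv_trq_P:
  assumes char2: "CHAR('a::{field,finite}) = 2" and "m > 0" and q: "q = 2 ^ m"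
    and card: "card (UNIV::'a set) = q ^ 2" and b_fixed: "b ^ q = b" and "b \<noteq> 0"
    and "\<delta> ^ q \<noteq> \<delta>"
    and inj: "inj (\<lambda>x::'a. b * (x ^ q + x + \<delta>) ^ (2 * q + 3) + x)"
  shows "lin_quartic_inv (trq q \<delta> ^ 2) (1 / (b * trq q \<delta>)) m
           (trq q (b * (x ^ q + x + \<delta>) ^ (2 * q + 3) + x) + b * \<delta> ^ (2 * q + 2) * trq q \<delta>)
         = trq q x"
proof -
  define A C D where "A = b * trq q \<delta>" and "C = trq q \<delta> ^ 2" and "D = 1 / A"
  have "A \<noteq> 0"
    using assms(6,7) by (auto simp: A_def trq_def add_eq_0_iff uminus_CHAR_2[OF char2])
  have C_fixed: "C ^ q = C" and D_fixed: "D ^ q = D"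
    using trq_power_eq_self[OF char2 q card, of \<delta>] b_fixed
    by (simp_all add: C_def D_def A_def power_power_commute[of _ 2] power_mult_distrib power_one_over)
  then have "lin_quartic C D ` {t. t ^ q = t} = {t. t ^ q = t}"
    using lin_quartic_power_eq_self[OF char2 q] lin_quartic_inj_on_fixed[OF char2 q card b_fixed _ inj]
      \<open>A \<noteq> 0\<close> by (intro endo_inj_surj) (auto simp: C_def D_def A_def)
  then have "lin_quartic_inv C D m (A * lin_quartic C D (trq q x)) = trq q x"
    using lin_quartic_inv_inverse[OF char2 \<open>m > 0\<close>, of C D "trq q x"] C_fixed D_fixed \<open>A \<noteq> 0\<close>
      card_fixed_subfield_ge[OF char2 q card] trq_power_eq_self[OF char2 q card]
    unfolding q D_def by (simp add: mult.commute)
  then show ?thesis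
    using trq_P_eq_lin_quartic[OF char2 q card b_fixed, of \<delta> x] \<open>A \<noteq> 0\<close>
    by (simp add: A_def C_def D_def)
qed

theorem theorem3p12:
  fixes m q :: nat and b \<delta> :: "'a::{field,finite}"
  assumes "m > 0" and "q = 2 ^ m" and "card (UNIV::'a set) = q ^ 2"
    and "b ^ q = b" and "b \<noteq> 0"
    and "\<delta> ^ q \<noteq> \<delta>"
    and "bij (\<lambda>x::'a. b * (x ^ q + x + \<delta>) ^ (2 * q + 3) + x)"
  shows "let A = b * trq q \<delta>; B = b * \<delta> ^ (2 * q + 2) * trq q \<delta>;
             C = (trq q \<delta>) ^ 2; D = 1 / A;
             P = (\<lambda>x::'a. b * (x ^ q + x + \<delta>) ^ (2 * q + 3) + x);
             Pinv = (\<lambda>x::'a. x + b * (\<delta> + (\<Sum>i<m.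
                 (D ^ (2 ^ i) * (Sseq C D (m - 1 - i)) ^ (2 ^ (i + 1))
                  + D powi (1 - 2 ^ i) * Sseq C D (i + 1)) * (x ^ q + x + B) ^ (2 ^ i))) ^ (2 * q + 3))
         in (\<forall>c. P (Pinv c) = c) \<and> (\<forall>c. Pinv (P c) = c)"
proof -
  have "card (UNIV::'a set) = 2 ^ (2 * m)"
    using assms(2,3) by (metis power_mult mult.commute)
  then have char2: "CHAR('a) = 2"
    by (rule CHAR_eq_2_if_card_power2) (use assms(1) in simp)
  define A B C D where "A = b * trq q \<delta>" and "B = b * \<delta> ^ (2 * q + 2) * trq q \<delta>"
    and "C = trq q \<delta> ^ 2" and "D = 1 / A"
  define P where "P x = b * (x ^ q + x + \<delta>) ^ (2 * q + 3) + x" for x :: 'a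
  define Pinv where "Pinv y = y + b * (\<delta> + lin_quartic_inv C D m (y ^ q + y + B)) ^ (2 * q + 3)" for y :: 'a
  have left: "Pinv (P x) = x" for x
  proof -
    have "lin_quartic_inv C D m (P x ^ q + P x + B) = trq q x"
      using lin_quartic_inv_trq_P[OF char2 assms(1-6) bij_is_inj[OF assms(7)], of x]
      by (simp add: P_def A_def B_def C_def D_def trq_def add.commute)
    then show ?thesis
      by (simp add: Pinv_def P_def trq_def algebra_simps char2_add_self[OF char2])
  qed
  have right: "P (Pinv y) = y" for y
    using left assms(7) unfolding bij_def surj_def P_def by metis
  show ?thesis
    using left right unfolding Let_def P_def Pinv_def lin_quartic_inv_def A_def B_def C_def D_def
    by blast
qed

end
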